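(* Let $q:\mathbb{R}\to[0,\infty)$ be an even probability density, let $r:\mathbb{R}\to\mathbb{R}$ be measurable, and let $A=\sum_i a_i|i\rangle\langle i|$ be a Hermitian operator on a finite-dimensional Hilbert space $\mathcal{H}$ such that $\int|r(p)|\,q(a_i-p)\,dp<\infty$ for every eigenvalue $a_i$; set $s(a)\coloneqq(q*r)(a)=\int_{\mathbb{R}}q(a-p)r(p)\,dp$. Let $\rho$ be a density operator on $\mathcal{H}$, let $|q\rangle\coloneqq\int_{\mathbb{R}}dp\,\sqrt{q(p)}\,|p\rangle$, let $W\coloneqq e^{i\hat{x}\otimes A}=\sum_i\int dx\,e^{ixa_i}|x\rangle\langle x|\otimes|i\rangle\langle i|$, and define $$P(p)\coloneqq\operatorname{Tr}\!\left[(|p\rangle\langle p|\otimes I)\,W(|q\rangle\langle q|\otimes\rho)W^{\dagger}\right]\quad(p\in\mathbb{R}),$$ the probability density of the outcome of a momentum measurement on the control mode. Then $P$ is a probability density and $$\int_{\mathbb{R}}r(p)\,P(p)\,dp=\operatorname{Tr}[s(A)\rho].$$ That is, preparing $|q\rangle\langle q|\otimes\rho$, applying $e^{i\hat{x}\otimes A}$, measuring the control mode in the momentum basis with outcome $p$ and outputting $r(p)$ yields a random variable with expected value $\operatorname{Tr}[s(A)\rho]$.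
   Context: The control register is a single bosonic mode (qumode) with Hilbert space $L^2(\mathbb{R})$; $\{|x\rangle\}_{x\in\mathbb{R}}$ and $\{|p\rangle\}_{p\in\mathbb{R}}$ are the generalized position and momentum eigenbases, with $\langle x|p\rangle=e^{ipx}/\sqrt{2\pi}$, $\langle p|p'\rangle=\delta(p-p')$, and $\hat{x}=\int x|x\rangle\langle x|\,dx$ is the position quadrature operator. $s(A)$ is defined by the functional calculus. *)

theory Defs
  imports "HOL-Analysis.Analysis"
begin

text \<open>Finite-dimensional Hilbert space H = complex^'n, operators = complex^'n^'n.\<close>

definition cinner :: "complex^'n \<Rightarrow> complex^'n \<Rightarrow> complex" where
  "cinner v w = (\<Sum>k\<in>UNIV. cnj (v$k) * w$k)"

definition adj :: "complex^'n^'n \<Rightarrow> complex^'n^'n" where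
  "adj M = (\<chi> i j. cnj (M$j$i))"

definition outer :: "complex^'n \<Rightarrow> complex^'n \<Rightarrow> complex^'n^'n" where
  "outer v w = (\<chi> i j. v$i * cnj (w$j))"

definition cscale :: "complex \<Rightarrow> complex^'n^'n \<Rightarrow> complex^'n^'n" where
  "cscale c M = (\<chi> i j. c * M$i$j)"

definition orthonormal_basis :: "('n::finite \<Rightarrow> complex^'n) \<Rightarrow> bool" where
  "orthonormal_basis u \<longleftrightarrow> (\<forall>i j. cinner (u i) (u j) = (if i = j then 1 else 0))"

definition hermitian :: "complex^'n^'n \<Rightarrow> bool" where
  "hermitian M \<longleftrightarrow> adj M = M"

definition density_op :: "complex^'n^'n \<Rightarrow> bool" where
  "density_op \<rho> \<longleftrightarrow> hermitian \<rho> \<and> (\<forall>v. cinner v (\<rho> *v v) \<in> \<real> \<and> 0 \<le> Re (cinner v (\<rho> *v v)))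
      \<and> trace \<rho> = 1"

text \<open>Functional calculus for A = \<Sum>i a_i |u_i><u_i| (u orthonormal eigenbasis, a real eigenvalues):
  f(A) = \<Sum>i f(a_i) |u_i><u_i|.\<close>
definition fun_calc :: "(real \<Rightarrow> real) \<Rightarrow> ('n::finite \<Rightarrow> complex^'n) \<Rightarrow> ('n \<Rightarrow> real) \<Rightarrow> complex^'n^'n" where
  "fun_calc f u a = (\<Sum>i\<in>UNIV. cscale (complex_of_real (f (a i))) (outer (u i) (u i)))"

text \<open>Qumode in momentum representation.  An operator \<Omega> on L^2(R) \<otimes> H is described by its
  momentum kernel K p p' = <p|\<Omega>|p'> (an operator on H).
  Kernel of |\<phi>><\<phi>| \<otimes> \<rho>, where \<phi> is the momentum wavefunction <p|\<phi>>:\<close>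
definition prod_kernel :: "(real \<Rightarrow> complex) \<Rightarrow> complex^'n^'n \<Rightarrow> real \<Rightarrow> real \<Rightarrow> complex^'n^'n" where
  "prod_kernel \<phi> \<rho> = (\<lambda>p p'. cscale (\<phi> p * cnj (\<phi> p')) \<rho>)"

text \<open>Momentum wavefunction of |q> = \<integral> dp sqrt(q p) |p>\<close>
definition qket :: "(real \<Rightarrow> real) \<Rightarrow> real \<Rightarrow> complex" where
  "qket q p = complex_of_real (sqrt (q p))"

text \<open>Since <x|p> = e^{ipx}/sqrt(2\<pi>), e^{i a x} |p> = |p + a>, i.e. <p|e^{i a x}|\<psi>> = <p - a|\<psi>>.
  Hence W = e^{i x \<otimes> A} = \<Sum>i e^{i a_i x} \<otimes> |u_i><u_i| acts on momentum kernels by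
  <p|W \<Omega> W^\<dagger>|p'> = \<Sum>i j |u_i><u_i| <p - a_i|\<Omega>|p' - a_j> |u_j><u_j|.\<close>
definition conj_W :: "('n::finite \<Rightarrow> complex^'n) \<Rightarrow> ('n \<Rightarrow> real)
      \<Rightarrow> (real \<Rightarrow> real \<Rightarrow> complex^'n^'n) \<Rightarrow> real \<Rightarrow> real \<Rightarrow> complex^'n^'n" where
  "conj_W u a K = (\<lambda>p p'. \<Sum>i\<in>UNIV. \<Sum>j\<in>UNIV.
       outer (u i) (u i) ** K (p - a i) (p' - a j) ** outer (u j) (u j))"

text \<open>Tr[(|p><p| \<otimes> I) \<Omega>] = tr_H <p|\<Omega>|p>\<close>
definition mom_prob :: "(real \<Rightarrow> real \<Rightarrow> complex^'n^'n) \<Rightarrow> real \<Rightarrow> complex" where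
  "mom_prob K p = trace (K p p)"

end

theory Submission
  imports Defs
begin

(* On the i-th eigenspace of A, W shifts the momentum amplitude of the control mode by a_i.
   Under the partial trace the cross terms between different eigenspaces vanish by
   orthogonality, so P(p) = sum_i w_i q(p - a_i) is a mixture of translates of q with the
   populations w_i = <u_i|rho|u_i> of rho as weights; hence P is a probability density.
   Since q is even, the integral of r against q(. - a_i) is (q * r)(a_i) = s(a_i), so the
   expected outcome is sum_i w_i s(a_i) = Tr[s(A) rho]. *)

lemma outer_mult_outer: "outer v w ** outer x y = cscale (cinner w x) (outer v y)"
  unfolding outer_def cscale_def cinner_def matrix_matrix_mult_def
  by (simp add: vec_eq_iff sum_distrib_left sum_distrib_right mult_ac)

lemma trace_cscale_mult: "trace (cscale c M ** X) = c * trace (M ** X)"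
  unfolding trace_def matrix_matrix_mult_def cscale_def
  by (simp add: sum_distrib_left mult.assoc)

lemma trace_sum: "trace (sum f S) = (\<Sum>i\<in>S. trace (f i))"
  unfolding trace_def by (simp add: sum_component sum.swap[of _ S])

lemma trace_sum_mult: "trace (sum f S ** X) = (\<Sum>i\<in>S. trace (f i ** X))"
  unfolding trace_def matrix_matrix_mult_def
  by (simp add: sum_component sum_distrib_right sum.swap[of _ S])

lemma trace_outer_mult: "trace (outer v w ** X) = cinner w (X *v v)"
  unfolding trace_def matrix_matrix_mult_def outer_def cinner_def matrix_vector_mult_def
  by (simp add: sum_distrib_left mult_ac) (rule sum.swap)

lemma trace_outer_mult_outer:
  "trace (outer u u' ** X ** outer v v') = cinner v' u * cinner u' (X *v v)"
proof -
  have "trace (outer u u' ** X ** outer v v') = trace ((outer v v' ** outer u u') ** X)"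
    by (simp add: trace_mul_sym[of _ "outer v v'"] matrix_mul_assoc)
  also have "\<dots> = cinner v' u * cinner u' (X *v v)"
    by (simp add: outer_mult_outer trace_cscale_mult trace_outer_mult)
  finally show ?thesis .
qed

lemma sum_outer_eq_mat_1:
  fixes u :: "'n::finite \<Rightarrow> complex^'n"
  assumes "orthonormal_basis u"
  shows "(\<Sum>i\<in>UNIV. outer (u i) (u i)) = mat 1"
proof -
  define V :: "complex^'n^'n" where "V = (\<chi> k i. u i $ k)"
  have "adj V ** V = mat 1"
    using assms unfolding orthonormal_basis_def cinner_def
    by (simp add: V_def adj_def matrix_matrix_mult_def mat_def vec_eq_iff)
  then have "V ** adj V = mat 1"
    using matrix_left_right_inverse by blast
  moreover have "V ** adj V = (\<Sum>i\<in>UNIV. outer (u i) (u i))"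
    by (simp add: V_def adj_def outer_def matrix_matrix_mult_def vec_eq_iff sum_component)
  ultimately show ?thesis by simp
qed

lemma trace_eq_sum_cinner:
  assumes "orthonormal_basis u"
  shows "trace X = (\<Sum>i\<in>UNIV. cinner (u i) (X *v u i))"
proof -
  have "trace X = trace ((\<Sum>i\<in>UNIV. outer (u i) (u i)) ** X)"
    by (simp add: sum_outer_eq_mat_1[OF assms])
  then show ?thesis
    by (simp add: trace_sum_mult trace_outer_mult)
qed

lemma trace_fun_calc_mult:
  "trace (fun_calc f u a ** X) = (\<Sum>i\<in>UNIV. of_real (f (a i)) * cinner (u i) (X *v u i))"
  by (simp add: fun_calc_def trace_sum_mult trace_cscale_mult trace_outer_mult)

lemma cinner_cscale_mult: "cinner v (cscale c X *v w) = c * cinner v (X *v w)"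
  unfolding cinner_def cscale_def matrix_vector_mult_def
  by (simp add: sum_distrib_left mult_ac)

lemma mom_prob_conj_W_prod_kernel:
  assumes "orthonormal_basis u"
  shows "mom_prob (conj_W u a (prod_kernel \<phi> \<rho>)) p
    = (\<Sum>i\<in>UNIV. \<phi> (p - a i) * cnj (\<phi> (p - a i)) * cinner (u i) (\<rho> *v u i))"
proof -
  have "mom_prob (conj_W u a (prod_kernel \<phi> \<rho>)) p
      = (\<Sum>i\<in>UNIV. \<Sum>j\<in>UNIV. cinner (u j) (u i)
           * cinner (u i) (prod_kernel \<phi> \<rho> (p - a i) (p - a j) *v u j))"
    unfolding mom_prob_def conj_W_def trace_sum trace_outer_mult_outer ..
  also have "\<dots> = (\<Sum>i\<in>UNIV. cinner (u i) (prod_kernel \<phi> \<rho> (p - a i) (p - a i) *v u i))"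
  proof -
    have "cinner (u j) (u i) = of_bool (j = i)" for i j
      using assms by (simp add: orthonormal_basis_def)
    then show ?thesis by simp
  qed
  finally show ?thesis
    by (simp add: prod_kernel_def cinner_cscale_mult)
qed

lemma density_op_diagonal_real:
  assumes "density_op \<rho>"
  shows "cinner v (\<rho> *v v) = of_real (Re (cinner v (\<rho> *v v)))"
  using assms by (simp add: density_op_def complex_is_Real_iff)

lemma density_op_diagonal_nonneg:
  assumes "density_op \<rho>"
  shows "0 \<le> Re (cinner v (\<rho> *v v))"
  using assms by (simp add: density_op_def)

lemma density_op_sum_diagonal:
  assumes "density_op \<rho>" and "orthonormal_basis u"
  shows "(\<Sum>i\<in>UNIV. Re (cinner (u i) (\<rho> *v u i))) = 1"
proof -
  have "(\<Sum>i\<in>UNIV. cinner (u i) (\<rho> *v u i)) = 1"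
    using assms by (simp add: density_op_def trace_eq_sum_cinner[symmetric])
  then show ?thesis
    by (metis Re_sum one_complex.sel(1))
qed

lemma qket_mult_cnj:
  assumes "0 \<le> q x"
  shows "qket q x * cnj (qket q x) = of_real (q x)"
  using assms by (simp add: qket_def flip: of_real_mult)

lemma has_bochner_integral_lborel_translate:
  fixes f :: "real \<Rightarrow> 'a::{banach, second_countable_topology}"
  assumes "has_bochner_integral lborel f x"
  shows "has_bochner_integral lborel (\<lambda>p. f (p - c)) x"
  using lborel_has_bochner_integral_real_affine_iff[of 1 f x "- c"] assms by simp

lemma has_bochner_integral_convolution_even:
  fixes q r :: "real \<Rightarrow> real"
  assumes q_even: "\<And>x. q (- x) = q x" and q_nonneg: "\<And>x. 0 \<le> q x"
    and [measurable]: "q \<in> borel_measurable borel" "r \<in> borel_measurable borel"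
    and abs_int: "integrable lborel (\<lambda>p. \<bar>r p\<bar> * q (c - p))"
  shows "has_bochner_integral lborel (\<lambda>p. r p * q (p - c)) (\<integral>p. q (c - p) * r p \<partial>lborel)"
proof -
  have shift_even: "q (p - c) = q (c - p)" for p
    using q_even[of "c - p"] by simp
  have "integrable lborel (\<lambda>p. \<bar>q (c - p) * r p\<bar>)"
    using abs_int by (simp add: abs_mult abs_of_nonneg q_nonneg mult.commute)
  then have "integrable lborel (\<lambda>p. q (c - p) * r p)"
    by (subst (asm) integrable_abs_iff) auto
  then show ?thesis
    by (simp add: shift_even mult.commute has_bochner_integral_iff)
qed

lemma has_bochner_integral_weighted_sum:
  fixes w :: "'i \<Rightarrow> real"
  assumes "\<And>i. i \<in> I \<Longrightarrow> has_bochner_integral M (f i) (x i)"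
  shows "has_bochner_integral M (\<lambda>p. \<Sum>i\<in>I. w i * f i p) (\<Sum>i\<in>I. w i * x i)"
  using assms by (intro has_bochner_integral_sum has_bochner_integral_mult_right)

theorem theorem3:
  fixes q r :: "real \<Rightarrow> real"
    and u :: "'n::finite \<Rightarrow> complex^'n" and a :: "'n \<Rightarrow> real"
    and A \<rho> :: "complex^'n^'n"
    and s :: "real \<Rightarrow> real" and P :: "real \<Rightarrow> complex"
  assumes q_nonneg: "\<And>x. 0 \<le> q x"
    and q_even: "\<And>x. q (- x) = q x"
    and q_meas: "q \<in> borel_measurable lborel"
    and q_int: "integrable lborel q"
    and q_norm: "(\<integral>x. q x \<partial>lborel) = 1"
    and r_meas: "r \<in> borel_measurable lborel"
    and onb: "orthonormal_basis u"
    and A_def: "A = (\<Sum>i\<in>UNIV. cscale (complex_of_real (a i)) (outer (u i) (u i)))"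
    and r_int: "\<And>i. integrable lborel (\<lambda>p. \<bar>r p\<bar> * q (a i - p))"
    and s_def: "\<And>x. s x = (\<integral>p. q (x - p) * r p \<partial>lborel)"
    and rho: "density_op \<rho>"
    and P_def: "P = mom_prob (conj_W u a (prod_kernel (qket q) \<rho>))"
  shows "(\<forall>p. P p \<in> \<real> \<and> 0 \<le> Re (P p))
      \<and> integrable lborel (\<lambda>p. Re (P p))
      \<and> (\<integral>p. Re (P p) \<partial>lborel) = 1
      \<and> integrable lborel (\<lambda>p. r p * Re (P p))
      \<and> complex_of_real (\<integral>p. r p * Re (P p) \<partial>lborel) = trace (fun_calc s u a ** \<rho>)"
proof -
  define w where "w i = Re (cinner (u i) (\<rho> *v u i))" for i
  have diagonal: "cinner (u i) (\<rho> *v u i) = of_real (w i)" for i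
    unfolding w_def using rho by (rule density_op_diagonal_real)
  have P_eq: "P p = of_real (\<Sum>i\<in>UNIV. w i * q (p - a i))" for p
    by (simp add: P_def mom_prob_conj_W_prod_kernel[OF onb] qket_mult_cnj[of q, OF q_nonneg]
        diagonal mult.commute)
  have trace_eq: "trace (fun_calc s u a ** \<rho>) = of_real (\<Sum>i\<in>UNIV. w i * s (a i))"
    by (simp add: trace_fun_calc_mult diagonal mult.commute)
  have "has_bochner_integral lborel (\<lambda>p. q (p - a i)) 1" for i
    using q_int q_norm
    by (intro has_bochner_integral_lborel_translate) (simp add: has_bochner_integral_iff)
  then have "has_bochner_integral lborel (\<lambda>p. Re (P p)) (\<Sum>i\<in>UNIV. w i * 1)"
    unfolding P_eq Re_complex_of_real by (rule has_bochner_integral_weighted_sum)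
  moreover have "has_bochner_integral lborel (\<lambda>p. r p * Re (P p)) (\<Sum>i\<in>UNIV. w i * s (a i))"
    unfolding P_eq Re_complex_of_real sum_distrib_left mult.left_commute[of "r _"] s_def
    using q_even q_nonneg q_meas r_meas r_int
    by (intro has_bochner_integral_weighted_sum has_bochner_integral_convolution_even) auto
  moreover have "0 \<le> w i" for i
    unfolding w_def using rho by (rule density_op_diagonal_nonneg)
  ultimately show ?thesis
    using density_op_sum_diagonal[OF rho onb] q_nonneg
    by (auto simp: P_eq trace_eq w_def has_bochner_integral_iff intro: sum_nonneg)
qed

end
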